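(* Let $M\ge 2$ be an integer, $\sigma>0$, and fix an index $m\in\{1,\dots,M\}$. For complex numbers $c_{1,m},\dots,c_{M,m}$, let $n_1,\dots,n_M$ be independent circularly-symmetric complex Gaussian random variables, $n_{m'}\sim\mathcal{CN}(0,2\sigma^2)$ (real and imaginary parts independent, each $\mathcal N(0,\sigma^2)$), and set $X_{m'}=|c_{m',m}+n_{m'}|$ for $m'=1,\dots,M$. Define the conditional correct detection probability $$P_{c,m}=P\big(X_m> X_{m'}\ \text{for all } m'\in\{1,\dots,M\},\ m'\neq m\big)=\int_0^\infty f_{X_m}(r;|c_{m,m}|)\prod_{m'\neq m}\Big(1-Q_1\big(\tfrac{|c_{m',m}|}{\sigma},\tfrac{r}{\sigma}\big)\Big)\,dr,$$ which depends only on the amplitudes $|c_{1,m}|,\dots,|c_{M,m}|$. Then $P_{c,m}$ is monotonically increasing in the desired signal amplitude $|c_{m,m}|$, and monotonically decreasing in each interfering amplitude $|c_{m',m}|$, for every $m'\neq m$ (the other amplitudes being held fixed).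
   Context: $f_{X}(r;\mu)=\frac{r}{\sigma^2}\exp\!\big(-\frac{r^2+\mu^2}{2\sigma^2}\big)I_0\!\big(\frac{r\mu}{\sigma^2}\big)$ for $r\ge0$ is the Rician density with non-centrality $\mu\ge0$ and scale $\sigma$, where $I_0$ is the modified Bessel function of the first kind of order zero; its CDF is $1-Q_1(\mu/\sigma,r/\sigma)$, where $Q_1$ is the first-order Marcum Q-function. Interpretation: $c_{m',m}$ is the effective channel coefficient from transmit port $m$ to receive port $m'$ and the detector picks the port of maximum received amplitude. *)

theory Defs
  imports "HOL-Probability.Probability"
begin

text \<open>Density of a circularly-symmetric complex Gaussian CN(0, 2 sigma^2) on the complex
plane (identified with R^2, Lebesgue measure): real and imaginary parts are independent N(0, sigma^2).\<close>
definition cgauss_density :: "real \<Rightarrow> complex \<Rightarrow> real" where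
  "cgauss_density \<sigma> z = exp (- (cmod z)\<^sup>2 / (2 * \<sigma>\<^sup>2)) / (2 * pi * \<sigma>\<^sup>2)"

definition cgauss :: "real \<Rightarrow> complex measure" where
  "cgauss \<sigma> = density lborel (\<lambda>z. ennreal (cgauss_density \<sigma> z))"

definition noise_measure :: "nat \<Rightarrow> real \<Rightarrow> (nat \<Rightarrow> complex) measure" where
  "noise_measure M \<sigma> = PiM {1..M} (\<lambda>_. cgauss \<sigma>)"

text \<open>Conditional correct detection probability P_{c,m}, where c k stands for c_{k,m}:
  P( |c_m + n_m| > |c_k + n_k| for all k in {1..M}, k \<noteq> m ).\<close>
definition Pc :: "nat \<Rightarrow> real \<Rightarrow> nat \<Rightarrow> (nat \<Rightarrow> complex) \<Rightarrow> real" where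
  "Pc M \<sigma> m c = measure (noise_measure M \<sigma>)
     {n \<in> space (noise_measure M \<sigma>).
        \<forall>k\<in>{1..M}. k \<noteq> m \<longrightarrow> cmod (c k + n k) < cmod (c m + n m)}"

end

theory Submission
  imports Defs
begin

text \<open>
  Conditioning on all noise samples except the one at the port whose amplitude changes reduces
  both claims to a single shifted Gaussian \<open>Y \<sim> CN(0, 2\<sigma>\<^sup>2)\<close>: if \<open>|c| \<le> |a|\<close>, then
  \<open>|a + Y|\<close> is stochastically larger than \<open>|c + Y|\<close>. To see this, let \<open>R\<close> be the reflection
  in the perpendicular bisector of \<open>-a\<close> and \<open>-c\<close>. It preserves Lebesgue measure, exchanges
  \<open>|a + y|\<close> and \<open>|c + y|\<close>, and satisfies \<open>|R y| \<le> |y|\<close> whenever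
  \<open>|a + y| \<le> |c + y|\<close>. Since the Gaussian density is radially decreasing, pairing every \<open>y\<close>
  with \<open>R y\<close> shows that each down-set of radii gets at most as much mass from \<open>|a + Y|\<close> as
  from \<open>|c + Y|\<close>. That \<open>R\<close> preserves Lebesgue measure follows from factoring an affine map of
  the plane with determinant \<open>\<plusminus>1\<close> into triangular maps, where Fubini and one-dimensional
  affine substitutions apply.
\<close>

section \<open>Area-preserving affine maps of the plane\<close>

lemma nn_integral_lborel_pair_upper_triangular:
  fixes f :: "real \<times> real \<Rightarrow> ennreal"
  assumes f[measurable]: "f \<in> borel_measurable (lborel \<Otimes>\<^sub>M lborel)" and det: "\<bar>a * d\<bar> = 1"
  shows "(\<integral>\<^sup>+p. f (a * fst p + b * snd p + s, d * snd p + t) \<partial>(lborel \<Otimes>\<^sub>M lborel))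
    = integral\<^sup>N (lborel \<Otimes>\<^sub>M lborel) f"
proof -
  have "a \<noteq> 0" "d \<noteq> 0" using det by auto
  define F where "F v = (\<integral>\<^sup>+x. f (x, v) \<partial>lborel)" for v
  have [measurable]: "F \<in> borel_measurable borel"
    unfolding F_def by measurable
  have inner: "(\<integral>\<^sup>+x. f (a * x + b * y + s, d * y + t) \<partial>lborel) = ennreal \<bar>d\<bar> * F (t + d * y)" for y
  proof -
    have "F (t + d * y) = ennreal \<bar>a\<bar> * (\<integral>\<^sup>+x. f (a * x + b * y + s, d * y + t) \<partial>lborel)"
      unfolding F_def using nn_integral_real_affine[of "\<lambda>x. f (x, d * y + t)" a "b * y + s"] \<open>a \<noteq> 0\<close>
      by (simp add: ac_simps)
    then have "ennreal \<bar>d\<bar> * F (t + d * y) = ennreal (\<bar>d\<bar> * \<bar>a\<bar>) * (\<integral>\<^sup>+x. f (a * x + b * y + s, d * y + t) \<partial>lborel)"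
      by (simp add: ennreal_mult mult.assoc)
    then show ?thesis
      using det by (simp add: abs_mult mult.commute)
  qed
  have "(\<integral>\<^sup>+p. f (a * fst p + b * snd p + s, d * snd p + t) \<partial>(lborel \<Otimes>\<^sub>M lborel))
      = (\<integral>\<^sup>+y. \<integral>\<^sup>+x. f (a * x + b * y + s, d * y + t) \<partial>lborel \<partial>lborel)"
    using lborel_pair.nn_integral_snd[of "\<lambda>p. f (a * fst p + b * snd p + s, d * snd p + t)"] by simp
  also have "\<dots> = ennreal \<bar>d\<bar> * (\<integral>\<^sup>+y. F (t + d * y) \<partial>lborel)"
    by (simp add: inner nn_integral_cmult)
  also have "\<dots> = integral\<^sup>N lborel F"
    using nn_integral_real_affine[of F d t] \<open>d \<noteq> 0\<close> by simp
  also have "\<dots> = integral\<^sup>N (lborel \<Otimes>\<^sub>M lborel) f"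
    unfolding F_def by (rule lborel_pair.nn_integral_snd) measurable
  finally show ?thesis .
qed

lemma nn_integral_lborel_pair_lower_triangular:
  fixes f :: "real \<times> real \<Rightarrow> ennreal"
  assumes f[measurable]: "f \<in> borel_measurable (lborel \<Otimes>\<^sub>M lborel)" and det: "\<bar>a * d\<bar> = 1"
  shows "(\<integral>\<^sup>+p. f (a * fst p + s, c * fst p + d * snd p + t) \<partial>(lborel \<Otimes>\<^sub>M lborel))
    = integral\<^sup>N (lborel \<Otimes>\<^sub>M lborel) f"
proof -
  have "a \<noteq> 0" "d \<noteq> 0" using det by auto
  define F where "F u = (\<integral>\<^sup>+y. f (u, y) \<partial>lborel)" for u
  have [measurable]: "F \<in> borel_measurable borel"
    unfolding F_def by measurable
  have inner: "(\<integral>\<^sup>+y. f (a * x + s, c * x + d * y + t) \<partial>lborel) = ennreal \<bar>a\<bar> * F (s + a * x)" for x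
  proof -
    have "F (s + a * x) = ennreal \<bar>d\<bar> * (\<integral>\<^sup>+y. f (a * x + s, c * x + d * y + t) \<partial>lborel)"
      unfolding F_def using nn_integral_real_affine[of "\<lambda>y. f (a * x + s, y)" d "c * x + t"] \<open>d \<noteq> 0\<close>
      by (simp add: ac_simps)
    then have "ennreal \<bar>a\<bar> * F (s + a * x) = ennreal (\<bar>a\<bar> * \<bar>d\<bar>) * (\<integral>\<^sup>+y. f (a * x + s, c * x + d * y + t) \<partial>lborel)"
      by (simp add: ennreal_mult mult.assoc)
    then show ?thesis
      using det by (simp add: abs_mult)
  qed
  have "(\<integral>\<^sup>+p. f (a * fst p + s, c * fst p + d * snd p + t) \<partial>(lborel \<Otimes>\<^sub>M lborel))
      = (\<integral>\<^sup>+x. \<integral>\<^sup>+y. f (a * x + s, c * x + d * y + t) \<partial>lborel \<partial>lborel)"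
    using lborel.nn_integral_fst[of "\<lambda>p. f (a * fst p + s, c * fst p + d * snd p + t)"] by simp
  also have "\<dots> = ennreal \<bar>a\<bar> * (\<integral>\<^sup>+x. F (s + a * x) \<partial>lborel)"
    by (simp add: inner nn_integral_cmult)
  also have "\<dots> = integral\<^sup>N lborel F"
    using nn_integral_real_affine[of F a s] \<open>a \<noteq> 0\<close> by simp
  also have "\<dots> = integral\<^sup>N (lborel \<Otimes>\<^sub>M lborel) f"
    unfolding F_def by (rule lborel.nn_integral_fst) measurable
  finally show ?thesis .
qed

lemma nn_integral_lborel_pair_unimodular_affine:
  fixes f :: "real \<times> real \<Rightarrow> ennreal"
  assumes f[measurable]: "f \<in> borel_measurable (lborel \<Otimes>\<^sub>M lborel)"
    and det: "\<bar>\<alpha> * \<delta> - \<beta> * \<gamma>\<bar> = 1"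
  shows "(\<integral>\<^sup>+p. f (\<alpha> * fst p + \<beta> * snd p + s, \<gamma> * fst p + \<delta> * snd p + t) \<partial>(lborel \<Otimes>\<^sub>M lborel))
    = integral\<^sup>N (lborel \<Otimes>\<^sub>M lborel) f"
proof -
  \<comment> \<open>For \<open>\<alpha>' \<noteq> 0\<close> the matrix factors as (unit lower triangular) \<open>\<cdot>\<close> (upper triangular).\<close>
  have LU: "(\<integral>\<^sup>+p. f (\<alpha>' * fst p + \<beta>' * snd p + s, \<gamma>' * fst p + \<delta>' * snd p + t) \<partial>(lborel \<Otimes>\<^sub>M lborel))
      = integral\<^sup>N (lborel \<Otimes>\<^sub>M lborel) f"
    if "\<alpha>' \<noteq> 0" "\<bar>\<alpha>' * \<delta>' - \<beta>' * \<gamma>'\<bar> = 1" for \<alpha>' \<beta>' \<gamma>' \<delta>'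
  proof -
    define D where "D = \<alpha>' * \<delta>' - \<beta>' * \<gamma>'"
    define L where "L q = f (fst q + s, (\<gamma>' / \<alpha>') * fst q + snd q + t)" for q
    have [measurable]: "L \<in> borel_measurable (lborel \<Otimes>\<^sub>M lborel)"
      unfolding L_def by measurable
    have lower_upper: "\<gamma>' / \<alpha>' * (\<alpha>' * x + \<beta>' * y) + D / \<alpha>' * y = \<gamma>' * x + \<delta>' * y" for x y
      using \<open>\<alpha>' \<noteq> 0\<close> by (simp add: D_def field_simps)
    have "(\<integral>\<^sup>+p. f (\<alpha>' * fst p + \<beta>' * snd p + s, \<gamma>' * fst p + \<delta>' * snd p + t) \<partial>(lborel \<Otimes>\<^sub>M lborel))
        = (\<integral>\<^sup>+p. L (\<alpha>' * fst p + \<beta>' * snd p + 0, (D / \<alpha>') * snd p + 0) \<partial>(lborel \<Otimes>\<^sub>M lborel))"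
      by (intro nn_integral_cong) (simp only: L_def fst_conv snd_conv add_0_right lower_upper)
    also have "\<dots> = integral\<^sup>N (lborel \<Otimes>\<^sub>M lborel) L"
      using that by (intro nn_integral_lborel_pair_upper_triangular) (auto simp: D_def)
    also have "\<dots> = integral\<^sup>N (lborel \<Otimes>\<^sub>M lborel) f"
      using nn_integral_lborel_pair_lower_triangular[OF f, of 1 1 s "\<gamma>' / \<alpha>'" t]
      unfolding L_def by simp
    finally show ?thesis .
  qed
  show ?thesis
  proof (cases "\<alpha> = 0")
    case False
    then show ?thesis using LU det by blast
  next
    case True
    \<comment> \<open>Precomposing with the shear \<open>(x, y) \<mapsto> (x, x + y)\<close> makes the top-left entry nonzero.\<close>
    then have "\<beta> \<noteq> 0" using det by auto
    define G where "G q = f (\<alpha> * fst q + \<beta> * snd q + s, \<gamma> * fst q + \<delta> * snd q + t)" for q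
    have [measurable]: "G \<in> borel_measurable (lborel \<Otimes>\<^sub>M lborel)"
      unfolding G_def by measurable
    have "integral\<^sup>N (lborel \<Otimes>\<^sub>M lborel) G = (\<integral>\<^sup>+p. G (1 * fst p + 0, 1 * fst p + 1 * snd p + 0) \<partial>(lborel \<Otimes>\<^sub>M lborel))"
      by (rule nn_integral_lborel_pair_lower_triangular[symmetric]) auto
    also have "\<dots> = (\<integral>\<^sup>+p. f ((\<alpha> + \<beta>) * fst p + \<beta> * snd p + s, (\<gamma> + \<delta>) * fst p + \<delta> * snd p + t) \<partial>(lborel \<Otimes>\<^sub>M lborel))"
      unfolding G_def by (intro nn_integral_cong) (simp add: algebra_simps)
    also have "\<dots> = integral\<^sup>N (lborel \<Otimes>\<^sub>M lborel) f"
      using True \<open>\<beta> \<noteq> 0\<close> det by (intro LU) (auto simp: algebra_simps)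
    finally show ?thesis unfolding G_def .
  qed
qed

lemma measurable_Complex[measurable]:
  assumes [measurable]: "f \<in> borel_measurable M" "g \<in> borel_measurable M"
  shows "(\<lambda>x. Complex (f x) (g x)) \<in> borel_measurable M"
  unfolding Complex_eq by measurable

lemma distr_lborel_pair_Complex:
  "distr (lborel \<Otimes>\<^sub>M lborel) borel (\<lambda>p. Complex (fst p) (snd p)) = (lborel :: complex measure)"
proof (rule lborel_eqI[symmetric])
  fix l u :: complex
  assume le: "\<And>b. b \<in> Basis \<Longrightarrow> l \<bullet> b \<le> u \<bullet> b"
  have "Re l \<le> Re u" "Im l \<le> Im u"
    using le[of 1] le[of \<i>] by (simp_all add: Basis_complex_def)
  moreover have "(\<lambda>p. Complex (fst p) (snd p)) -` box l u \<inter> space (lborel \<Otimes>\<^sub>M lborel)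
      = {Re l<..<Re u} \<times> {Im l<..<Im u}"
    by (auto simp: box_def Basis_complex_def space_pair_measure)
  ultimately show "emeasure (distr (lborel \<Otimes>\<^sub>M lborel) borel (\<lambda>p. Complex (fst p) (snd p))) (box l u) =
      ennreal (\<Prod>b\<in>Basis. (u - l) \<bullet> b)"
    by (simp add: emeasure_distr lborel.emeasure_pair_measure_Times Basis_complex_def
        ennreal_mult[symmetric])
qed simp

lemma nn_integral_lborel_complex_eq_pair:
  fixes H :: "complex \<Rightarrow> ennreal"
  assumes [measurable]: "H \<in> borel_measurable borel"
  shows "integral\<^sup>N lborel H = (\<integral>\<^sup>+p. H (Complex (fst p) (snd p)) \<partial>(lborel \<Otimes>\<^sub>M lborel))"
  by (subst distr_lborel_pair_Complex[symmetric]) (simp add: nn_integral_distr)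

lemma nn_integral_lborel_complex_unimodular_affine:
  fixes H :: "complex \<Rightarrow> ennreal"
  assumes [measurable]: "H \<in> borel_measurable borel"
    and det: "\<bar>\<alpha> * \<delta> - \<beta> * \<gamma>\<bar> = 1"
  shows "(\<integral>\<^sup>+z. H (Complex (\<alpha> * Re z + \<beta> * Im z + s) (\<gamma> * Re z + \<delta> * Im z + t)) \<partial>lborel)
    = integral\<^sup>N lborel H"
  using nn_integral_lborel_pair_unimodular_affine[of "\<lambda>p. H (Complex (fst p) (snd p))", OF _ det]
  by (simp add: nn_integral_lborel_complex_eq_pair)

section \<open>Reflection in a perpendicular bisector\<close>

text \<open>The reflection of \<open>x\<close> in the perpendicular bisector of \<open>p\<close> and \<open>q\<close>; for \<open>p = q\<close> the
  division by zero makes it the identity.\<close>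

definition bisector_reflection :: "'a::real_inner \<Rightarrow> 'a \<Rightarrow> 'a \<Rightarrow> 'a" where
  "bisector_reflection p q x =
     x - ((2 * inner x (p - q) - ((norm p)\<^sup>2 - (norm q)\<^sup>2)) / (norm (p - q))\<^sup>2) *\<^sub>R (p - q)"

lemma bisector_reflection_commute: "bisector_reflection p q = bisector_reflection q p"
proof
  fix x
  have swap: "(((2 * inner x (-v) - (-c)) / (norm (-v))\<^sup>2) *\<^sub>R (-v) :: 'a) = ((2 * inner x v - c) / (norm v)\<^sup>2) *\<^sub>R v"
    for v :: 'a and c
    by (simp flip: scaleR_minus_left add: minus_divide_left)
  show "bisector_reflection p q x = bisector_reflection q p x"
    using swap[of "p - q" "(norm p)\<^sup>2 - (norm q)\<^sup>2"] by (simp add: bisector_reflection_def)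
qed

lemma bisector_reflection_eq_scaleR:
  assumes "p \<noteq> q"
  obtains k where "bisector_reflection p q x = x - k *\<^sub>R (p - q)"
    and "k * (norm (p - q))\<^sup>2 = 2 * inner x (p - q) - ((norm p)\<^sup>2 - (norm q)\<^sup>2)"
  using assms by (simp add: bisector_reflection_def)

lemma dist_bisector_reflection: "dist (bisector_reflection p q x) p = dist x q"
proof (cases "p = q")
  case False
  then obtain k where R: "bisector_reflection p q x = x - k *\<^sub>R (p - q)"
    and k0: "k * (norm (p - q))\<^sup>2 = 2 * inner x (p - q) - ((norm p)\<^sup>2 - (norm q)\<^sup>2)"
    by (rule bisector_reflection_eq_scaleR)
  have k: "k * (norm (p - q))\<^sup>2 = 2 * inner (x - p) (p - q) + (norm (p - q))\<^sup>2"
    using k0 unfolding power2_norm_eq_inner by (simp add: inner_diff_left inner_diff_right inner_commute)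
  have "(dist (bisector_reflection p q x) p)\<^sup>2
      = (norm (x - p))\<^sup>2 - 2 * k * inner (x - p) (p - q) + k * (k * (norm (p - q))\<^sup>2)"
    unfolding R dist_norm power2_norm_eq_inner by (simp add: inner_commute algebra_simps)
  also have "\<dots> = (norm (x - p))\<^sup>2 + 2 * inner (x - p) (p - q) + (norm (p - q))\<^sup>2"
    using k by algebra
  also have "\<dots> = (dist x q)\<^sup>2"
    unfolding dist_norm power2_norm_eq_inner by (simp add: inner_diff_left inner_diff_right inner_commute)
  finally show ?thesis by simp
qed (simp add: bisector_reflection_def)

lemma norm_bisector_reflection:
  "((norm (bisector_reflection p q x))\<^sup>2 - (norm x)\<^sup>2) * (norm (p - q))\<^sup>2
    = ((norm p)\<^sup>2 - (norm q)\<^sup>2) * ((dist x p)\<^sup>2 - (dist x q)\<^sup>2)"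
proof (cases "p = q")
  case False
  define c where "c = (norm p)\<^sup>2 - (norm q)\<^sup>2"
  obtain k where R: "bisector_reflection p q x = x - k *\<^sub>R (p - q)"
    and k: "k * (norm (p - q))\<^sup>2 = 2 * inner x (p - q) - c"
    using bisector_reflection_eq_scaleR[OF False] unfolding c_def by blast
  have "((norm (bisector_reflection p q x))\<^sup>2 - (norm x)\<^sup>2) * (norm (p - q))\<^sup>2
      = (k * (norm (p - q))\<^sup>2) * (k * (norm (p - q))\<^sup>2 - 2 * inner x (p - q))"
    unfolding R power2_norm_eq_inner by (simp add: inner_commute algebra_simps)
  also have "\<dots> = c * (c - 2 * inner x (p - q))"
    using k by algebra
  also have "c - 2 * inner x (p - q) = (dist x p)\<^sup>2 - (dist x q)\<^sup>2"
    unfolding c_def dist_norm power2_norm_eq_inner by (simp add: inner_diff_left inner_diff_right inner_commute)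
  finally show ?thesis unfolding c_def .
qed simp

lemma measurable_bisector_reflection[measurable]: "bisector_reflection p q \<in> borel_measurable borel"
  unfolding bisector_reflection_def divide_inverse
  by (intro borel_measurable_continuous_onI continuous_intros)

lemma nn_integral_lborel_bisector_reflection:
  fixes p q :: complex and H :: "complex \<Rightarrow> ennreal"
  assumes [measurable]: "H \<in> borel_measurable borel"
  shows "(\<integral>\<^sup>+z. H (bisector_reflection p q z) \<partial>lborel) = integral\<^sup>N lborel H"
proof (cases "p = q")
  case False
  define v1 where "v1 = Re (p - q)"
  define v2 where "v2 = Im (p - q)"
  define N where "N = (cmod (p - q))\<^sup>2"
  define c where "c = (cmod p)\<^sup>2 - (cmod q)\<^sup>2"
  have N: "N = v1\<^sup>2 + v2\<^sup>2" "N \<noteq> 0"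
    using False by (simp_all add: N_def v1_def v2_def cmod_power2 complex_eq_iff)
  have R: "bisector_reflection p q z
      = Complex ((1 - 2 * v1\<^sup>2 / N) * Re z + (- 2 * v1 * v2 / N) * Im z + c * v1 / N)
                ((- 2 * v1 * v2 / N) * Re z + (1 - 2 * v2\<^sup>2 / N) * Im z + c * v2 / N)" for z
    using N(2) by (simp add: complex_eq_iff bisector_reflection_def inner_complex_def
        v1_def v2_def N_def c_def field_simps power2_eq_square)
  have "(N - 2 * v1\<^sup>2) * (N - 2 * v2\<^sup>2) - (2 * v1 * v2)\<^sup>2 = - N\<^sup>2"
    unfolding N(1) by algebra
  then have "(1 - 2 * v1\<^sup>2 / N) * (1 - 2 * v2\<^sup>2 / N) - (- 2 * v1 * v2 / N) * (- 2 * v1 * v2 / N) = -1"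
    using N(2) by (simp add: field_simps power2_eq_square)
  then show ?thesis
    unfolding R by (intro nn_integral_lborel_complex_unimodular_affine) simp_all
qed (simp add: bisector_reflection_def)

lemma norm_bisector_reflection_le:
  assumes "norm q \<le> norm p" and "dist x p \<le> dist x q"
  shows "norm (bisector_reflection p q x) \<le> norm x"
proof (cases "p = q")
  case False
  have "((norm p)\<^sup>2 - (norm q)\<^sup>2) * ((dist x p)\<^sup>2 - (dist x q)\<^sup>2) \<le> 0"
    using assms by (intro mult_nonneg_nonpos) (auto simp: power_mono)
  then have "((norm (bisector_reflection p q x))\<^sup>2 - (norm x)\<^sup>2) * (norm (p - q))\<^sup>2 \<le> 0"
    by (simp only: norm_bisector_reflection)
  then have "(norm (bisector_reflection p q x))\<^sup>2 \<le> (norm x)\<^sup>2"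
    using False by (simp add: mult_le_0_iff)
  then show ?thesis by (simp add: power2_le_iff_abs_le)
qed (simp add: bisector_reflection_def)

lemma norm_bisector_reflection_ge:
  assumes "norm q \<le> norm p" and "dist x q \<le> dist x p"
  shows "norm x \<le> norm (bisector_reflection p q x)"
proof (cases "p = q")
  case False
  have "0 \<le> ((norm p)\<^sup>2 - (norm q)\<^sup>2) * ((dist x p)\<^sup>2 - (dist x q)\<^sup>2)"
    using assms by (intro mult_nonneg_nonneg) (auto simp: power_mono)
  then have "0 \<le> ((norm (bisector_reflection p q x))\<^sup>2 - (norm x)\<^sup>2) * (norm (p - q))\<^sup>2"
    by (simp only: norm_bisector_reflection)
  then have "(norm x)\<^sup>2 \<le> (norm (bisector_reflection p q x))\<^sup>2"
    using False by (simp add: zero_le_mult_iff)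
  then show ?thesis by (simp add: power2_le_iff_abs_le)
qed (simp add: bisector_reflection_def)

section \<open>Radial comparison of shifted complex Gaussians\<close>

lemma ennreal_rearrangement:
  fixes x y a b :: ennreal
  assumes "x \<le> y" and "b \<le> a"
  shows "x * a + y * b \<le> x * b + y * a"
proof -
  obtain d e where "y = x + d" and "a = b + e"
    using assms by (auto simp: le_iff_add)
  then show ?thesis
    by (simp add: distrib_left distrib_right add.assoc add_increasing2 add_mono)
qed

lemma nn_integral_mono_symmetrized:
  assumes [measurable]: "R \<in> M \<rightarrow>\<^sub>M M"
    and invariant: "\<And>H. H \<in> borel_measurable M \<Longrightarrow> (\<integral>\<^sup>+y. H (R y) \<partial>M) = integral\<^sup>N M H"
    and F[measurable]: "F \<in> borel_measurable M" and G[measurable]: "G \<in> borel_measurable M"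
    and pointwise: "\<And>y. y \<in> space M \<Longrightarrow> F y + F (R y) \<le> G y + G (R y)"
  shows "integral\<^sup>N M F \<le> integral\<^sup>N M G"
proof -
  have "integral\<^sup>N M F + integral\<^sup>N M F = (\<integral>\<^sup>+y. F y + F (R y) \<partial>M)"
    using nn_integral_add[of F M "\<lambda>y. F (R y)"] invariant[OF F] by simp
  also have "\<dots> \<le> (\<integral>\<^sup>+y. G y + G (R y) \<partial>M)"
    by (rule nn_integral_mono) (rule pointwise)
  also have "\<dots> = integral\<^sup>N M G + integral\<^sup>N M G"
    using nn_integral_add[of G M "\<lambda>y. G (R y)"] invariant[OF G] by simp
  finally show ?thesis
    by (meson add_strict_mono linorder_not_less)
qed

lemma cgauss_density_antimono:
  assumes "cmod z \<le> cmod w"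
  shows "cgauss_density \<sigma> w \<le> cgauss_density \<sigma> z"
proof -
  have "(cmod z)\<^sup>2 \<le> (cmod w)\<^sup>2"
    using assms by (simp add: power_mono)
  then have "- (cmod w)\<^sup>2 / (2 * \<sigma>\<^sup>2) \<le> - (cmod z)\<^sup>2 / (2 * \<sigma>\<^sup>2)"
    by (intro divide_right_mono) auto
  then show ?thesis
    unfolding cgauss_density_def by (intro divide_right_mono) auto
qed

lemma measurable_cgauss_density[measurable]: "cgauss_density \<sigma> \<in> borel_measurable borel"
  unfolding cgauss_density_def[abs_def] by measurable

lemma cgauss_density_Complex:
  "cgauss_density \<sigma> (Complex x y) = normal_density 0 \<sigma> x * normal_density 0 \<sigma> y"
  unfolding cgauss_density_def normal_density_def
  by (simp add: cmod_power2 exp_add[symmetric] add_divide_distrib diff_divide_distrib)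

lemma prob_space_cgauss:
  assumes "\<sigma> > 0"
  shows "prob_space (cgauss \<sigma>)"
proof
  have normal: "(\<integral>\<^sup>+x. ennreal (normal_density 0 \<sigma> x) \<partial>lborel) = 1"
  proof -
    interpret prob_space "density lborel (normal_density 0 \<sigma>)"
      using prob_space_normal_density assms by blast
    show ?thesis
      using emeasure_space_1 by (simp add: emeasure_density)
  qed
  have "emeasure (cgauss \<sigma>) (space (cgauss \<sigma>)) = (\<integral>\<^sup>+z. ennreal (cgauss_density \<sigma> z) \<partial>lborel)"
    unfolding cgauss_def by (simp add: emeasure_density)
  also have "\<dots> = (\<integral>\<^sup>+p. ennreal (normal_density 0 \<sigma> (fst p)) * ennreal (normal_density 0 \<sigma> (snd p))
      \<partial>(lborel \<Otimes>\<^sub>M lborel))"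
    by (simp add: nn_integral_lborel_complex_eq_pair cgauss_density_Complex ennreal_mult)
  also have "\<dots> = (\<integral>\<^sup>+x. ennreal (normal_density 0 \<sigma> x) * (\<integral>\<^sup>+y. ennreal (normal_density 0 \<sigma> y) \<partial>lborel)
      \<partial>lborel)"
    by (subst lborel.nn_integral_fst[symmetric]) (auto simp: nn_integral_cmult)
  also have "\<dots> = 1"
    by (simp add: normal)
  finally show "emeasure (cgauss \<sigma>) (space (cgauss \<sigma>)) = 1" .
qed

lemma space_cgauss[simp]: "space (cgauss \<sigma>) = UNIV"
  by (simp add: cgauss_def)

lemma sets_cgauss[simp]: "sets (cgauss \<sigma>) = sets borel"
  by (simp add: cgauss_def)

lemma emeasure_cgauss_radial:
  assumes [measurable]: "S \<in> sets borel"
  shows "emeasure (cgauss \<sigma>) {y. cmod (e + y) \<in> S}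
    = (\<integral>\<^sup>+y. ennreal (cgauss_density \<sigma> y) * indicator S (cmod (e + y)) \<partial>lborel)"
  unfolding cgauss_def by (subst emeasure_density) (auto simp: indicator_def)

lemma emeasure_cgauss_shift_downset_le:
  fixes a c :: complex
  assumes ca: "cmod c \<le> cmod a" and [measurable]: "S \<in> sets borel"
    and down: "\<And>r r'. r \<in> S \<Longrightarrow> r' \<le> r \<Longrightarrow> r' \<in> S"
  shows "emeasure (cgauss \<sigma>) {y. cmod (a + y) \<in> S} \<le> emeasure (cgauss \<sigma>) {y. cmod (c + y) \<in> S}"
proof -
  define R where "R = bisector_reflection (- a) (- c)"
  let ?\<phi> = "\<lambda>y. ennreal (cgauss_density \<sigma> y)"
  let ?A = "\<lambda>y. indicator S (cmod (a + y)) :: ennreal"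
  let ?C = "\<lambda>y. indicator S (cmod (c + y)) :: ennreal"
  have dist_plus: "dist y (- e) = cmod (e + y)" for e y :: complex
    by (simp add: dist_norm add.commute)
  have swap: "cmod (a + R y) = cmod (c + y)" "cmod (c + R y) = cmod (a + y)" for y
    using dist_bisector_reflection[of "- a" "- c" y] dist_bisector_reflection[of "- c" "- a" y]
    by (simp_all add: R_def dist_plus bisector_reflection_commute[of "- a"])
  have ind_mono: "r' \<le> r \<Longrightarrow> indicator S r \<le> (indicator S r' :: ennreal)" for r r'
    using down by (auto simp: indicator_def)
  have "(\<integral>\<^sup>+y. ?\<phi> y * ?A y \<partial>lborel) \<le> (\<integral>\<^sup>+y. ?\<phi> y * ?C y \<partial>lborel)"
  proof (rule nn_integral_mono_symmetrized)
    show "R \<in> lborel \<rightarrow>\<^sub>M lborel"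
      unfolding R_def by simp
    show "(\<integral>\<^sup>+y. H (R y) \<partial>lborel) = integral\<^sup>N lborel H" if "H \<in> borel_measurable lborel" for H
      using that unfolding R_def by (intro nn_integral_lborel_bisector_reflection) simp
  next
    fix y
    show "?\<phi> y * ?A y + ?\<phi> (R y) * ?A (R y) \<le> ?\<phi> y * ?C y + ?\<phi> (R y) * ?C (R y)"
    proof (cases "cmod (a + y) \<le> cmod (c + y)")
      case True
      then have "cmod (R y) \<le> cmod y"
        unfolding R_def using ca by (intro norm_bisector_reflection_le) (simp_all add: dist_plus)
      then have "?\<phi> y \<le> ?\<phi> (R y)"
        by (simp add: cgauss_density_antimono ennreal_leI)
      then show ?thesis
        using True by (simp add: swap ennreal_rearrangement ind_mono)
    next
      case False
      then have "cmod y \<le> cmod (R y)"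
        unfolding R_def using ca by (intro norm_bisector_reflection_ge) (simp_all add: dist_plus)
      then have "?\<phi> (R y) \<le> ?\<phi> y"
        by (simp add: cgauss_density_antimono ennreal_leI)
      then show ?thesis
        using False ennreal_rearrangement[of "?\<phi> (R y)" "?\<phi> y" "?A y" "?C y"]
        by (simp add: swap ind_mono add.commute)
    qed
  qed measurable
  then show ?thesis
    by (simp add: emeasure_cgauss_radial)
qed

lemma emeasure_cgauss_shift_upset_le:
  fixes a c :: complex
  assumes "\<sigma> > 0" and ca: "cmod c \<le> cmod a" and [measurable]: "U \<in> sets borel"
    and up: "\<And>r r'. r \<in> U \<Longrightarrow> r \<le> r' \<Longrightarrow> r' \<in> U"
  shows "emeasure (cgauss \<sigma>) {y. cmod (c + y) \<in> U} \<le> emeasure (cgauss \<sigma>) {y. cmod (a + y) \<in> U}"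
proof -
  interpret prob_space "cgauss \<sigma>"
    using \<open>\<sigma> > 0\<close> by (rule prob_space_cgauss)
  have compl: "emeasure (cgauss \<sigma>) {y. cmod (e + y) \<in> U} = 1 - emeasure (cgauss \<sigma>) {y. cmod (e + y) \<in> - U}"
    for e
  proof -
    have "{y. cmod (e + y) \<in> - U} \<in> sets (cgauss \<sigma>)"
      unfolding sets_cgauss by measurable
    then have "emeasure (cgauss \<sigma>) (space (cgauss \<sigma>) - {y. cmod (e + y) \<in> - U})
        = 1 - emeasure (cgauss \<sigma>) {y. cmod (e + y) \<in> - U}"
      by (subst emeasure_compl) (simp_all add: emeasure_space_1 del: space_cgauss)
    moreover have "space (cgauss \<sigma>) - {y. cmod (e + y) \<in> - U} = {y. cmod (e + y) \<in> U}"
      by auto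
    ultimately show ?thesis
      by simp
  qed
  have "emeasure (cgauss \<sigma>) {y. cmod (a + y) \<in> - U} \<le> emeasure (cgauss \<sigma>) {y. cmod (c + y) \<in> - U}"
    using ca up by (intro emeasure_cgauss_shift_downset_le) auto
  then show ?thesis
    unfolding compl by (rule ennreal_minus_mono[OF order_refl])
qed

section \<open>The detection probability\<close>

lemma (in product_sigma_finite) emeasure_PiM_insert_section:
  assumes "finite I" and "i \<notin> I" and E: "E \<in> sets (Pi\<^sub>M (insert i I) M)"
  shows "emeasure (Pi\<^sub>M (insert i I) M) E
    = (\<integral>\<^sup>+x. emeasure (M i) ((\<lambda>y. x(i := y)) -` E \<inter> space (M i)) \<partial>Pi\<^sub>M I M)"
proof -
  have "emeasure (Pi\<^sub>M (insert i I) M) E = (\<integral>\<^sup>+x. (\<integral>\<^sup>+y. indicator E (x(i := y)) \<partial>M i) \<partial>Pi\<^sub>M I M)"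
    using E assms by (simp flip: nn_integral_indicator add: product_nn_integral_insert)
  also have "\<dots> = (\<integral>\<^sup>+x. emeasure (M i) ((\<lambda>y. x(i := y)) -` E \<inter> space (M i)) \<partial>Pi\<^sub>M I M)"
  proof (rule nn_integral_cong)
    fix x assume "x \<in> space (Pi\<^sub>M I M)"
    then have "(\<lambda>y. x(i := y)) \<in> M i \<rightarrow>\<^sub>M Pi\<^sub>M (insert i I) M"
      using \<open>i \<notin> I\<close> by (rule measurable_component_update)
    then have "(\<lambda>y. x(i := y)) -` E \<inter> space (M i) \<in> sets (M i)"
      using E by (rule measurable_sets)
    then show "(\<integral>\<^sup>+y. indicator E (x(i := y)) \<partial>M i) = emeasure (M i) ((\<lambda>y. x(i := y)) -` E \<inter> space (M i))"
      by (auto simp flip: nn_integral_indicator intro!: nn_integral_cong split: split_indicator)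
  qed
  finally show ?thesis .
qed

lemma prob_space_noise_measure: "\<sigma> > 0 \<Longrightarrow> prob_space (noise_measure M \<sigma>)"
  unfolding noise_measure_def by (intro prob_space_PiM prob_space_cgauss)

definition detection_event :: "nat \<Rightarrow> real \<Rightarrow> nat \<Rightarrow> (nat \<Rightarrow> complex) \<Rightarrow> (nat \<Rightarrow> complex) set" where
  "detection_event M \<sigma> m c = {n \<in> space (noise_measure M \<sigma>).
     \<forall>k\<in>{1..M}. k \<noteq> m \<longrightarrow> cmod (c k + n k) < cmod (c m + n m)}"

lemma Pc_eq_measure_detection_event: "Pc M \<sigma> m c = measure (noise_measure M \<sigma>) (detection_event M \<sigma> m c)"
  unfolding Pc_def detection_event_def ..

lemma sets_detection_event:
  assumes "m \<in> {1..M}"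
  shows "detection_event M \<sigma> m c \<in> sets (noise_measure M \<sigma>)"
proof -
  have [measurable]: "(\<lambda>n. n k) \<in> borel_measurable (noise_measure M \<sigma>)" if "k \<in> {1..M}" for k
    using measurable_component_singleton[OF that, of "\<lambda>_. cgauss \<sigma>"]
    by (simp add: noise_measure_def cong: measurable_cong_sets)
  show ?thesis
    unfolding detection_event_def using assms by measurable
qed

lemma emeasure_detection_event_section:
  assumes "\<sigma> > 0" and "m \<in> {1..M}" and "j \<in> {1..M}"
  shows "emeasure (noise_measure M \<sigma>) (detection_event M \<sigma> m c)
    = (\<integral>\<^sup>+x. emeasure (cgauss \<sigma>) {y. \<forall>k\<in>{1..M}. k \<noteq> m \<longrightarrow>
          cmod (c k + (x(j := y)) k) < cmod (c m + (x(j := y)) m)} \<partial>Pi\<^sub>M ({1..M} - {j}) (\<lambda>_. cgauss \<sigma>))"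
proof -
  interpret product_sigma_finite "\<lambda>_. cgauss \<sigma>"
    using prob_space_imp_sigma_finite[OF prob_space_cgauss[OF \<open>\<sigma> > 0\<close>]]
    by (simp add: product_sigma_finite_def)
  define J where "J = {1..M} - {j}"
  have I: "insert j J = {1..M}"
    using \<open>j \<in> {1..M}\<close> by (auto simp: J_def)
  have E: "detection_event M \<sigma> m c \<in> sets (Pi\<^sub>M (insert j J) (\<lambda>_. cgauss \<sigma>))"
    unfolding I using sets_detection_event[OF \<open>m \<in> {1..M}\<close>] by (simp add: noise_measure_def)
  have "emeasure (Pi\<^sub>M (insert j J) (\<lambda>_. cgauss \<sigma>)) (detection_event M \<sigma> m c)
    = (\<integral>\<^sup>+x. emeasure (cgauss \<sigma>) ((\<lambda>y. x(j := y)) -` detection_event M \<sigma> m c \<inter> space (cgauss \<sigma>))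
        \<partial>Pi\<^sub>M J (\<lambda>_. cgauss \<sigma>))"
    by (rule emeasure_PiM_insert_section[OF _ _ E]) (simp_all add: J_def)
  also have "\<dots> = (\<integral>\<^sup>+x. emeasure (cgauss \<sigma>) {y. \<forall>k\<in>{1..M}. k \<noteq> m \<longrightarrow>
          cmod (c k + (x(j := y)) k) < cmod (c m + (x(j := y)) m)} \<partial>Pi\<^sub>M J (\<lambda>_. cgauss \<sigma>))"
  proof (rule nn_integral_cong)
    fix x assume "x \<in> space (Pi\<^sub>M J (\<lambda>_. cgauss \<sigma>))"
    then have "x(j := y) \<in> space (noise_measure M \<sigma>)" for y
      using \<open>j \<in> {1..M}\<close> by (auto simp: J_def noise_measure_def space_PiM PiE_def extensional_def)
    then show "emeasure (cgauss \<sigma>) ((\<lambda>y. x(j := y)) -` detection_event M \<sigma> m c \<inter> space (cgauss \<sigma>))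
      = emeasure (cgauss \<sigma>) {y. \<forall>k\<in>{1..M}. k \<noteq> m \<longrightarrow> cmod (c k + (x(j := y)) k) < cmod (c m + (x(j := y)) m)}"
      by (simp add: detection_event_def vimage_def)
  qed
  finally show ?thesis
    unfolding I by (simp add: J_def noise_measure_def)
qed

lemma Pc_mono_desired:
  assumes "\<sigma> > 0" and m: "m \<in> {1..M}" and ca: "cmod (c m) \<le> cmod a"
  shows "Pc M \<sigma> m c \<le> Pc M \<sigma> m (c(m := a))"
proof -
  interpret prob_space "noise_measure M \<sigma>"
    using \<open>\<sigma> > 0\<close> by (rule prob_space_noise_measure)
  define U where "U x = {r. \<forall>k\<in>{1..M}. k \<noteq> m \<longrightarrow> cmod (c k + x k) < r}" for x :: "nat \<Rightarrow> complex"
  have [measurable]: "U x \<in> sets borel" for x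
    unfolding U_def by measurable
  have sections:
    "{y. \<forall>k\<in>{1..M}. k \<noteq> m \<longrightarrow> cmod (c k + (x(m := y)) k) < cmod (c m + (x(m := y)) m)}
      = {y. cmod (c m + y) \<in> U x}"
    "{y. \<forall>k\<in>{1..M}. k \<noteq> m \<longrightarrow> cmod ((c(m := a)) k + (x(m := y)) k) < cmod ((c(m := a)) m + (x(m := y)) m)}
      = {y. cmod (a + y) \<in> U x}" for x
    by (auto simp: U_def)
  have "emeasure (noise_measure M \<sigma>) (detection_event M \<sigma> m c)
      \<le> emeasure (noise_measure M \<sigma>) (detection_event M \<sigma> m (c(m := a)))"
    unfolding emeasure_detection_event_section[OF \<open>\<sigma> > 0\<close> m m] sections
    using \<open>\<sigma> > 0\<close> ca by (intro nn_integral_mono emeasure_cgauss_shift_upset_le) (auto simp: U_def)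
  then show ?thesis
    by (simp add: Pc_eq_measure_detection_event emeasure_eq_measure)
qed

lemma Pc_antimono_interferer:
  assumes "\<sigma> > 0" and m: "m \<in> {1..M}" and j: "j \<in> {1..M}" "j \<noteq> m" and ca: "cmod (c j) \<le> cmod a"
  shows "Pc M \<sigma> m (c(j := a)) \<le> Pc M \<sigma> m c"
proof -
  interpret prob_space "noise_measure M \<sigma>"
    using \<open>\<sigma> > 0\<close> by (rule prob_space_noise_measure)
  define S where "S x = {r. (\<forall>k\<in>{1..M}. k \<noteq> m \<and> k \<noteq> j \<longrightarrow> cmod (c k + x k) < cmod (c m + x m))
      \<and> r < cmod (c m + x m)}" for x :: "nat \<Rightarrow> complex"
  have [measurable]: "S x \<in> sets borel" for x
    unfolding S_def by measurable
  have sections: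
    "{y. \<forall>k\<in>{1..M}. k \<noteq> m \<longrightarrow> cmod (c k + (x(j := y)) k) < cmod (c m + (x(j := y)) m)}
      = {y. cmod (c j + y) \<in> S x}"
    "{y. \<forall>k\<in>{1..M}. k \<noteq> m \<longrightarrow> cmod ((c(j := a)) k + (x(j := y)) k) < cmod ((c(j := a)) m + (x(j := y)) m)}
      = {y. cmod (a + y) \<in> S x}" for x
    using j by (auto simp: S_def)
  have "emeasure (noise_measure M \<sigma>) (detection_event M \<sigma> m (c(j := a)))
      \<le> emeasure (noise_measure M \<sigma>) (detection_event M \<sigma> m c)"
    unfolding emeasure_detection_event_section[OF \<open>\<sigma> > 0\<close> m j(1)] sections
    using ca by (intro nn_integral_mono emeasure_cgauss_shift_downset_le) (auto simp: S_def)
  then show ?thesis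
    by (simp add: Pc_eq_measure_detection_event emeasure_eq_measure)
qed

theorem theorem1:
  fixes M :: nat and \<sigma> :: real and m :: nat and c :: "nat \<Rightarrow> complex"
  assumes "M \<ge> 2" and "\<sigma> > 0" and "m \<in> {1..M}"
  shows "(\<forall>a. cmod (c m) \<le> cmod a \<longrightarrow> Pc M \<sigma> m c \<le> Pc M \<sigma> m (c(m := a)))
       \<and> (\<forall>j\<in>{1..M}. j \<noteq> m \<longrightarrow>
            (\<forall>a. cmod (c j) \<le> cmod a \<longrightarrow> Pc M \<sigma> m (c(j := a)) \<le> Pc M \<sigma> m c))"
  using assms(2,3) Pc_mono_desired Pc_antimono_interferer by blast

end
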